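(* Let $E/\mathbb{Q}$ be the elliptic curve $y^2=x^3+a_4x+a_6$ with $a_4,a_6\in\mathbb{Z}$. Suppose $(u,v)\in\mathbb{Z}^2$ is map-suitable for $E$ and $-D_E(u,v)$ is a negative fundamental discriminant. Then: (1) $v$ is square-free and $\gcd(u,v)=1$. (2) If $P\in E(\mathbb{Q})$ is not the point at infinity $\mathcal{O}$, there exist $A,B,C\in\mathbb{Z}$ with $\gcd(A,C)=\gcd(B,C)=1$ and $C>0$ such that $P=(A/C^2,B/C^3)$; putting $a=Av+C^2u$ and $g=\gcd(C,v)$, there exists an integer $\mu$ with $\frac{C^3}{g^2}\mu\equiv1\pmod{\frac{va}{g^2}}$. (3) For any such $\mu$, the form $$\frac{va}{g^2}x^2+2\mu\frac{Bv^2}{g^2}xy+\frac{\mu^2\frac{B^2v^4}{g^4}+d_E(u,v)}{\frac{va}{g^2}}y^2$$ is a positive definite binary quadratic form with integer coefficients and discriminant $-D_E(u,v)$.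
   Context: For integers $u,v$ put $d_E(u,v):=v(u^3+a_4uv^2-a_6v^3)$ and $D_E(u,v):=4d_E(u,v)$. A pair $(u,v)\in\mathbb{Z}^2$ is map-suitable for $E$ if $u$, $v$, $3u^2+a_4v^2$ and $D_E(u,v)$ are all positive. *)

theory Defs
  imports Complex_Main "HOL-Computational_Algebra.Squarefree" "HOL-Number_Theory.Cong"
begin

definition d_E :: "int \<Rightarrow> int \<Rightarrow> int \<Rightarrow> int \<Rightarrow> int" where
  "d_E a4 a6 u v = v * (u^3 + a4*u*v^2 - a6*v^3)"

definition D_E :: "int \<Rightarrow> int \<Rightarrow> int \<Rightarrow> int \<Rightarrow> int" where
  "D_E a4 a6 u v = 4 * d_E a4 a6 u v"

definition map_suitable :: "int \<Rightarrow> int \<Rightarrow> int \<Rightarrow> int \<Rightarrow> bool" where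
  "map_suitable a4 a6 u v \<longleftrightarrow> u > 0 \<and> v > 0 \<and> 3*u^2 + a4*v^2 > 0 \<and> D_E a4 a6 u v > 0"

definition fundamental_discriminant :: "int \<Rightarrow> bool" where
  "fundamental_discriminant D \<longleftrightarrow> D \<noteq> 1 \<and>
     ((D mod 4 = 1 \<and> squarefree D) \<or>
      (\<exists>m. D = 4*m \<and> (m mod 4 = 2 \<or> m mod 4 = 3) \<and> squarefree m))"

definition pos_def_form :: "real \<Rightarrow> real \<Rightarrow> real \<Rightarrow> bool" where
  "pos_def_form a b c \<longleftrightarrow> (\<forall>x y. (x, y) \<noteq> (0, 0) \<longrightarrow> a*x^2 + b*x*y + c*y^2 > 0)"

end

theory Submission
  imports Defs
begin

text \<open>Since \<open>-D_E = -4 d_E\<close> is a fundamental discriminant divisible by 4,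
\<open>d_E = v (u^3 + a4 u v^2 - a6 v^3)\<close> is squarefree; so \<open>v\<close> is squarefree and prime to \<open>u^3\<close>,
hence to \<open>u\<close>.

Write a rational point as \<open>(A/C^2, B/C^3)\<close> and let \<open>f(x) = x^3 + a4 x + a6\<close>. Factoring
\<open>f(A/C^2) - f(-u/v)\<close> gives \<open>v^4 B^2 + C^6 d_E = v a Q\<close> with \<open>a = A v + C^2 u\<close>, and
\<open>a > 0\<close> because \<open>f < 0\<close> to the left of \<open>-u/v\<close>. Dividing by \<open>g^4\<close>, \<open>g = gcd C v\<close>,
the modulus \<open>M = v a / g^2\<close> divides \<open>b^2 + N^2 d_E\<close>, where \<open>b = B v^2 / g^2\<close> and
\<open>N = C^3 / g^2\<close>; and \<open>N\<close> is a unit mod \<open>M\<close> because \<open>v\<close> is squarefree and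
\<open>gcd A C = 1\<close>. For an inverse \<open>\<mu>\<close> of \<open>N\<close> mod \<open>M\<close>, \<open>M\<close> then divides \<open>(\<mu> b)^2 + d_E\<close>,
so \<open>M x^2 + 2 \<mu> b x y + ((\<mu> b)^2 + d_E)/M y^2\<close> is an integral form of discriminant
\<open>-4 d_E\<close>, positive definite as \<open>M > 0\<close>.\<close>

lemma coprime_add_mult_iff:
  fixes m n k :: "'a::semiring_gcd"
  shows "coprime m (k*m + n) \<longleftrightarrow> coprime m n"
  by (simp add: coprime_iff_gcd_eq_1 gcd_add_mult)

lemma squarefree_mult_imp_coprime:
  fixes a b :: "'a::algebraic_semidom"
  assumes "squarefree (a*b)"
  shows "coprime a b"
proof (rule coprimeI)
  fix c assume "c dvd a" "c dvd b"
  then have "c^2 dvd a*b" by (simp add: power2_eq_square mult_dvd_mono)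
  with assms show "is_unit c" by (rule squarefreeD)
qed

lemma fundamental_discriminant_4_mult_imp_squarefree:
  fixes m :: int
  assumes "fundamental_discriminant (4*m)"
  shows "squarefree m"
  using assms unfolding fundamental_discriminant_def by auto

lemma squarefree_d_E_imp_squarefree:
  "squarefree (d_E a4 a6 u v) \<Longrightarrow> squarefree v"
  unfolding d_E_def by (rule squarefree_multD)

lemma squarefree_d_E_imp_coprime:
  assumes "squarefree (d_E a4 a6 u v)"
  shows "coprime u v"
proof -
  have "coprime v (u^3 + a4*u*v^2 - a6*v^3)"
    using assms unfolding d_E_def by (rule squarefree_mult_imp_coprime)
  then have "coprime v ((a4*u*v - a6*v^2)*v + u^3)"
    by (simp add: algebra_simps power2_eq_square power3_eq_cube)
  then show ?thesis
    by (simp only: coprime_add_mult_iff) (simp add: coprime_commute)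
qed

lemma pos_def_formI:
  fixes a b c :: real
  assumes a: "a > 0" and disc: "b^2 - 4*a*c < 0"
  shows "pos_def_form a b c"
  unfolding pos_def_form_def
proof (intro allI impI)
  fix x y :: real
  assume xy: "(x, y) \<noteq> (0, 0)"
  have "(2*a*x + b*y)^2 + (4*a*c - b^2)*y^2 > 0"
  proof (cases "y = 0")
    case True
    with xy a show ?thesis by simp
  next
    case False
    with disc have "(4*a*c - b^2)*y^2 > 0" by simp
    then show ?thesis by (simp add: add_nonneg_pos)
  qed
  also have "(2*a*x + b*y)^2 + (4*a*c - b^2)*y^2 = 4*a*(a*x^2 + b*x*y + c*y^2)"
    by (simp add: algebra_simps power2_eq_square)
  finally show "a*x^2 + b*x*y + c*y^2 > 0"
    using a by (simp add: zero_less_mult_iff)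
qed

lemma depressed_cubic_neg_below:
  fixes X S p q :: "'a::linordered_idom"
  assumes "X \<le> S" "S \<le> 0" "3*S^2 + p > 0" "S^3 + p*S + q < 0"
  shows "X^3 + p*X + q < 0"
proof -
  have "(-S)^2 \<le> (-X)^2" using assms(1,2) by (intro power_mono) simp_all
  moreover have "S*S \<le> X*S" using assms(1,2) by (rule mult_right_mono_neg)
  ultimately have "S^2 \<le> X^2" "S^2 \<le> X*S" by (simp_all add: power2_eq_square)
  then have "X^2 + X*S + S^2 + p > 0" using assms(3) by linarith
  then have "(X - S) * (X^2 + X*S + S^2 + p) \<le> 0"
    using assms(1) by (simp add: mult_nonpos_nonneg)
  moreover have "X^3 + p*X + q = (S^3 + p*S + q) + (X - S) * (X^2 + X*S + S^2 + p)"
    by (simp add: algebra_simps power2_eq_square power3_eq_cube)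
  ultimately show ?thesis using assms(4) by linarith
qed

text \<open>The point \<open>-u/v\<close> lies to the left of the real locus of the curve: with
  \<open>S = -C^2 u\<close> and \<open>w = v C^2\<close>, the cubic \<open>X^3 + a4 w^2 X + a6 w^3\<close> is negative at \<open>S\<close>
  and increasing there.\<close>

lemma map_suitable_point_a_pos:
  fixes A B C :: int
  assumes "map_suitable a4 a6 u v" "C \<noteq> 0" "B^2 = A^3 + a4*A*C^4 + a6*C^6"
  shows "A*v + C^2*u > 0"
proof (rule ccontr)
  assume "\<not> A*v + C^2*u > 0"
  have u: "u > 0" and v: "v > 0" and "3*u^2 + a4*v^2 > 0" and "d_E a4 a6 u v > 0"
    using assms(1) by (auto simp: map_suitable_def D_E_def)
  then have "u^3 + a4*u*v^2 - a6*v^3 > 0"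
    by (simp add: d_E_def zero_less_mult_iff)
  define w where "w = v*C^2"
  define S where "S = -(C^2*u)"
  have "3*S^2 + a4*w^2 = C^4*(3*u^2 + a4*v^2)"
    unfolding S_def w_def by algebra
  also have "\<dots> > 0"
    using \<open>3*u^2 + a4*v^2 > 0\<close> assms(2) by (simp add: zero_less_power_eq)
  finally have pos_slope: "3*S^2 + a4*w^2 > 0" .
  have "S^3 + a4*w^2*S + a6*w^3 = - (C^6*(u^3 + a4*u*v^2 - a6*v^3))"
    unfolding S_def w_def by algebra
  also have "\<dots> < 0"
    using \<open>u^3 + a4*u*v^2 - a6*v^3 > 0\<close> assms(2) by (simp add: zero_less_power_eq)
  finally have neg_value: "S^3 + a4*w^2*S + a6*w^3 < 0" .
  have "A*v \<le> S" "S \<le> 0"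
    using \<open>\<not> A*v + C^2*u > 0\<close> u by (simp_all add: S_def)
  then have "(A*v)^3 + a4*w^2*(A*v) + a6*w^3 < 0"
    using pos_slope neg_value by (rule depressed_cubic_neg_below)
  moreover have "(A*v)^3 + a4*w^2*(A*v) + a6*w^3 = v^3*B^2"
    unfolding w_def assms(3) by algebra
  ultimately show False using v by (simp add: mult_less_0_iff)
qed

lemma square_eq_cube_int:
  fixes q m :: int
  assumes "q^2 = m^3" "m > 0" "q > 0"
  obtains k where "k > 0" "m = k^2" "q = k^3"
proof -
  have "m^2 dvd q^2" using assms(1) by (simp add: power3_eq_cube power2_eq_square)
  then obtain k where q: "q = m*k" by auto
  then have "m^2 * k^2 = m^2 * m"
    using assms(1) by (simp add: power_mult_distrib power3_eq_cube power2_eq_square)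
  then have "m = k^2" using assms(2) by simp
  moreover have "k > 0" using assms(2,3) q by (simp add: zero_less_mult_iff)
  ultimately show thesis using q that by (simp add: power2_eq_square power3_eq_cube)
qed

lemma rat_point_integral_coords:
  fixes x y :: rat and a4 a6 :: int
  assumes "y^2 = x^3 + of_int a4 * x + of_int a6"
  obtains A B C :: int where "coprime A C" "coprime B C" "C > 0"
    "x = of_int A / of_int (C^2)" "y = of_int B / of_int (C^3)"
    "B^2 = A^3 + a4*A*C^4 + a6*C^6"
proof -
  obtain n m where "quotient_of x = (n, m)" by force
  then have m: "m > 0" "coprime n m" and x: "x = of_int n / of_int m"
    by (simp_all add: quotient_of_denom_pos quotient_of_coprime quotient_of_div)
  obtain p q where "quotient_of y = (p, q)" by force
  then have q: "q > 0" "coprime p q" and y: "y = of_int p / of_int q"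
    by (simp_all add: quotient_of_denom_pos quotient_of_coprime quotient_of_div)
  define K where "K = n^3 + a4*n*m^2 + a6*m^3"
  have "(of_int p / of_int q)^2 = (of_int K / of_int m^3 :: rat)"
    using assms m(1) unfolding x y[symmetric] K_def
    by (simp add: field_simps power2_eq_square power3_eq_cube)
  then have "(of_int (p^2 * m^3) :: rat) = of_int (q^2 * K)"
    using m(1) q(1) by (simp add: power_divide frac_eq_eq)
  then have eq: "p^2 * m^3 = q^2 * K" by (simp only: of_int_eq_iff)
  have "coprime m ((a4*n*m + a6*m^2)*m + n^3)"
    using m(2) by (simp only: coprime_add_mult_iff) (simp add: coprime_commute)
  then have "coprime K m"
    by (simp add: K_def algebra_simps power2_eq_square power3_eq_cube coprime_commute)
  have "q^2 dvd m^3"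
  proof -
    have "q^2 dvd p^2 * m^3" using eq by simp
    moreover have "coprime (q^2) (p^2)" using q(2) by (simp add: coprime_commute)
    ultimately show ?thesis by (simp add: coprime_dvd_mult_right_iff)
  qed
  moreover have "m^3 dvd q^2"
  proof -
    have "m^3 dvd q^2 * K" using eq by (metis dvd_triv_right)
    moreover have "coprime (m^3) K" using \<open>coprime K m\<close> by (simp add: coprime_commute)
    ultimately show ?thesis by (simp add: coprime_dvd_mult_left_iff)
  qed
  ultimately have "q^2 = m^3" using m(1) q(1) by (simp add: zdvd_antisym_nonneg)
  then obtain k where k: "k > 0" "m = k^2" "q = k^3" using m(1) q(1) by (rule square_eq_cube_int)
  show thesis
  proof
    show "coprime n k" "coprime p k" using m(2) q(2) k by simp_all
    show "x = of_int n / of_int (k^2)" "y = of_int p / of_int (k^3)" using x y k by simp_all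
    have "k^6 * p^2 = k^6 * (n^3 + a4*n*k^4 + a6*k^6)"
      using eq unfolding k K_def by (simp add: algebra_simps flip: power_mult)
    then show "p^2 = n^3 + a4*n*k^4 + a6*k^6" using k(1) by simp
  qed (fact k(1))
qed

lemma weierstrass_d_E_identity:
  fixes A B C u v a4 a6 :: int
  assumes "B^2 = A^3 + a4*A*C^4 + a6*C^6"
  shows "v^4*B^2 + C^6 * d_E a4 a6 u v
       = v*(A*v + C^2*u) * (A^2*v^2 - A*v*C^2*u + C^4*u^2 + a4*C^4*v^2)"
  unfolding d_E_def assms by algebra

lemma coprime_reduced_cube_modulus:
  fixes A C u v :: int
  assumes "squarefree v" "coprime A C"
  defines "g \<equiv> gcd C v"
  shows "coprime (C^3 div g^2) (v*(A*v + C^2*u) div g^2)"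
proof -
  have "v \<noteq> 0" using assms(1) by auto
  then have "g \<noteq> 0" by (simp add: g_def)
  define C' v' where "C' = C div g" and "v' = v div g"
  have C: "C = g*C'" and v: "v = g*v'" by (simp_all add: C'_def v'_def g_def)
  have "coprime C' v'"
    using div_gcd_coprime[of C v] \<open>v \<noteq> 0\<close> by (simp add: C'_def v'_def g_def)
  have "coprime g v'" using assms(1) v squarefree_mult_imp_coprime by simp
  have "coprime g A" "coprime C' A" using assms(2) C by (simp_all add: coprime_commute)
  define a' where "a' = A*v' + g*C'^2*u"
  have "coprime g ((C'^2*u)*g + A*v')" "coprime C' ((g*C'*u)*C' + A*v')"
    using \<open>coprime g A\<close> \<open>coprime g v'\<close> \<open>coprime C' A\<close> \<open>coprime C' v'\<close>
    by (simp_all only: coprime_add_mult_iff coprime_mult_right_iff)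
  then have "coprime g a'" "coprime C' a'"
    by (simp_all add: a'_def algebra_simps power2_eq_square)
  moreover have "C^3 div g^2 = g*C'^3" "v*(A*v + C^2*u) div g^2 = v'*a'"
    using \<open>g \<noteq> 0\<close> unfolding a'_def C v
    by (simp_all add: algebra_simps power2_eq_square power3_eq_cube)
  ultimately show ?thesis
    using \<open>coprime g v'\<close> \<open>coprime C' v'\<close> by simp
qed

lemma reduced_modulus_dvd:
  fixes A B C u v a4 a6 :: int
  assumes "squarefree v" "coprime A C" "B^2 = A^3 + a4*A*C^4 + a6*C^6"
  defines "g \<equiv> gcd C v"
  shows "v*(A*v + C^2*u) div g^2 dvd (B*v^2 div g^2)^2 + (C^3 div g^2)^2 * d_E a4 a6 u v"
proof -
  define M N b d where "M = v*(A*v + C^2*u) div g^2" and "N = C^3 div g^2"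
    and "b = B*v^2 div g^2" and "d = d_E a4 a6 u v"
  have "g \<noteq> 0" using assms(1) by (auto simp: g_def)
  obtain C' v' where C: "C = g*C'" and v: "v = g*v'"
    unfolding g_def by (meson gcd_dvd1 gcd_dvd2 dvdE)
  have M: "v*(A*v + C^2*u) = g^2*M" and N: "C^3 = g^2*N" and b: "B*v^2 = g^2*b"
    unfolding M_def N_def b_def C v using \<open>g \<noteq> 0\<close>
    by (simp_all add: algebra_simps power2_eq_square power3_eq_cube)
  have "g^2 * (g^2 * (b^2 + N^2*d)) = (B*v^2)^2 + (C^3)^2 * d"
    unfolding N b by (simp add: algebra_simps power2_eq_square)
  also have "\<dots> = v^4*B^2 + C^6 * d_E a4 a6 u v"
    by (simp add: d_def power_mult_distrib flip: power_mult)
  also have "\<dots> = v*(A*v + C^2*u) * (A^2*v^2 - A*v*C^2*u + C^4*u^2 + a4*C^4*v^2)"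
    using assms(3) by (rule weierstrass_d_E_identity)
  finally have "g^2 * (g^2 * (b^2 + N^2*d))
      = g^2 * (M * (A^2*v^2 - A*v*C^2*u + C^4*u^2 + a4*C^4*v^2))"
    unfolding M by (simp only: mult.assoc)
  then have "g^2 * (b^2 + N^2*d) = M * (A^2*v^2 - A*v*C^2*u + C^4*u^2 + a4*C^4*v^2)"
    using \<open>g \<noteq> 0\<close> by (subst (asm) mult_cancel_left) simp
  then have "M dvd g^2 * (b^2 + N^2*d)" by (metis dvd_triv_left)
  moreover have "coprime M (g^2)"
  proof -
    have "g dvd N" using \<open>g \<noteq> 0\<close> by (simp add: N_def C power3_eq_cube power2_eq_square)
    moreover have "coprime N M"
      using coprime_reduced_cube_modulus[OF assms(1,2), of u] by (simp add: M_def N_def g_def)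
    ultimately have "coprime g M" by (rule coprime_divisors[OF _ dvd_refl])
    then show ?thesis by (simp add: coprime_commute)
  qed
  ultimately show ?thesis
    by (simp add: M_def N_def b_def d_def coprime_dvd_mult_right_iff)
qed

lemma dvd_square_add_of_cong_inverse:
  fixes M N b d \<mu> :: int
  assumes "M dvd b^2 + N^2*d" "[N*\<mu> = 1] (mod M)"
  shows "M dvd (\<mu>*b)^2 + d"
proof -
  have "M dvd (N*\<mu> - 1) * ((N*\<mu> + 1) * d)"
    using assms(2) by (simp add: cong_iff_dvd_diff)
  then have "M dvd \<mu>^2 * (b^2 + N^2*d) - (N*\<mu> - 1) * ((N*\<mu> + 1) * d)"
    using assms(1) by (simp add: dvd_diff)
  also have "\<mu>^2 * (b^2 + N^2*d) - (N*\<mu> - 1) * ((N*\<mu> + 1) * d) = (\<mu>*b)^2 + d"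
    by (simp add: algebra_simps power2_eq_square)
  finally show ?thesis .
qed

lemma integral_pos_def_form_of_dvd:
  fixes M b d :: int
  assumes "M > 0" "d > 0" "M dvd b^2 + d"
  defines "c \<equiv> (of_int b^2 + of_int d) / of_int M :: rat"
  shows "c \<in> \<int>" and "pos_def_form (of_int M) (2 * of_int b) (of_rat c)"
    and "(2 * of_int b)^2 - 4 * of_int M * c = - 4 * of_int d"
proof -
  have "c = of_int ((b^2 + d) div M)" using assms(3) by (simp add: c_def of_int_div)
  then show "c \<in> \<int>" by simp
  have "of_rat c = (of_int b^2 + of_int d) / (of_int M :: real)"
    by (simp add: c_def of_rat_divide of_rat_add of_rat_power)
  then have "(2 * of_int b)^2 - 4 * of_int M * of_rat c = - 4 * (of_int d :: real)"
    using assms(1) by (simp add: field_simps)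
  then show "pos_def_form (of_int M) (2 * of_int b) (of_rat c)"
    using assms(1,2) by (intro pos_def_formI) simp_all
  show "(2 * of_int b)^2 - 4 * of_int M * c = - 4 * of_int d"
    using assms(1) by (simp add: c_def field_simps)
qed

lemma binary_form_of_point:
  fixes A B C u v a4 a6 :: int
  assumes "squarefree v" "coprime A C" "B^2 = A^3 + a4*A*C^4 + a6*C^6"
    and "A*v + C^2*u > 0" "v > 0" "d_E a4 a6 u v > 0"
  shows "let a = A*v + C^2*u; g = gcd C v in
           (\<exists>\<mu>::int. [(C^3 div g^2) * \<mu> = 1] (mod (v*a div g^2))) \<and>
           (\<forall>\<mu>::int. [(C^3 div g^2) * \<mu> = 1] (mod (v*a div g^2)) \<longrightarrow>
              (let qa = of_int (v*a) / of_int (g^2) :: rat;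
                   qb = 2 * of_int \<mu> * of_int (B*v^2) / of_int (g^2);
                   qc = (of_int \<mu>^2 * of_int (B^2*v^4) / of_int (g^4) + of_int (d_E a4 a6 u v)) / qa
               in qa \<in> \<int> \<and> qb \<in> \<int> \<and> qc \<in> \<int> \<and>
                  pos_def_form (of_rat qa) (of_rat qb) (of_rat qc) \<and>
                  qb^2 - 4*qa*qc = - of_int (D_E a4 a6 u v)))"
proof -
  define g where "g = gcd C v"
  define M N b where "M = v*(A*v + C^2*u) div g^2" and "N = C^3 div g^2" and "b = B*v^2 div g^2"
  have "g dvd v" "g dvd A*v + C^2*u" by (simp_all add: g_def power2_eq_square)
  then have "g^2 dvd v*(A*v + C^2*u)" "g^2 dvd B*v^2"
    by (simp_all add: power2_eq_square mult_dvd_mono)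
  then have "v*(A*v + C^2*u) = g^2 * M" "B*v^2 = g^2 * b"
    by (simp_all add: M_def b_def)
  have "g^2 * M > 0"
    using assms(4,5) \<open>v*(A*v + C^2*u) = g^2 * M\<close> by (metis mult_pos_pos)
  then have "M > 0" by (simp add: zero_less_mult_iff)
  have qa: "of_int (v*(A*v + C^2*u)) / of_int (g^2) = (of_int M :: rat)"
    using \<open>g^2 dvd v*(A*v + C^2*u)\<close> by (simp add: M_def of_int_div)
  have qb: "2 * of_int \<mu> * of_int (B*v^2) / of_int (g^2) = (2 * of_int (\<mu>*b) :: rat)" for \<mu>
    using \<open>g^2 dvd B*v^2\<close> by (simp add: b_def of_int_div)
  have "g \<noteq> 0" using assms(5) by (simp add: g_def)
  have "(B*v^2)^2 = (g^2 * b)^2" using \<open>B*v^2 = g^2 * b\<close> by simp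
  then have "B^2*v^4 = g^4 * b^2" by (simp add: power_mult_distrib flip: power_mult)
  then have qc: "of_int \<mu>^2 * of_int (B^2*v^4) / of_int (g^4) = (of_int (\<mu>*b)^2 :: rat)" for \<mu>
    using \<open>g \<noteq> 0\<close> by (simp add: power_mult_distrib)
  show ?thesis
    unfolding Let_def g_def[symmetric] M_def[symmetric] N_def[symmetric] qa qb qc
  proof (rule conjI, goal_cases)
    case 1
    show ?case
      using coprime_reduced_cube_modulus[OF assms(1,2)]
      by (simp add: N_def M_def g_def cong_solve_coprime_int)
  next
    case 2
    have "M dvd (\<mu>*b)^2 + d_E a4 a6 u v" if "[N*\<mu> = 1] (mod M)" for \<mu>
      using reduced_modulus_dvd[OF assms(1-3)] that unfolding M_def N_def b_def g_def
      by (rule dvd_square_add_of_cong_inverse)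
    from integral_pos_def_form_of_dvd[OF \<open>M > 0\<close> assms(6) this]
    show ?case by (simp add: D_E_def of_rat_mult)
  qed
qed

theorem lemma2p2:
  fixes a4 a6 u v :: int
  assumes nonsing: "4*a4^3 + 27*a6^2 \<noteq> 0"
    and suit: "map_suitable a4 a6 u v"
    and fund: "fundamental_discriminant (- D_E a4 a6 u v)"
  shows "(squarefree v \<and> gcd u v = 1) \<and>
    (\<forall>x y :: rat. y^2 = x^3 + of_int a4 * x + of_int a6 \<longrightarrow>
      (\<exists>A B C :: int. gcd A C = 1 \<and> gcd B C = 1 \<and> C > 0 \<and>
         x = of_int A / of_int (C^2) \<and> y = of_int B / of_int (C^3) \<and>
         (let a = A*v + C^2*u; g = gcd C v in
           (\<exists>\<mu>::int. [(C^3 div g^2) * \<mu> = 1] (mod (v*a div g^2))) \<and>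
           (\<forall>\<mu>::int. [(C^3 div g^2) * \<mu> = 1] (mod (v*a div g^2)) \<longrightarrow>
              (let qa = of_int (v*a) / of_int (g^2) :: rat;
                   qb = 2 * of_int \<mu> * of_int (B*v^2) / of_int (g^2);
                   qc = (of_int \<mu>^2 * of_int (B^2*v^4) / of_int (g^4) + of_int (d_E a4 a6 u v)) / qa
               in qa \<in> \<int> \<and> qb \<in> \<int> \<and> qc \<in> \<int> \<and>
                  pos_def_form (of_rat qa) (of_rat qb) (of_rat qc) \<and>
                  qb^2 - 4*qa*qc = - of_int (D_E a4 a6 u v))))))"
proof -
  have v: "v > 0" and d: "d_E a4 a6 u v > 0"
    using suit by (auto simp: map_suitable_def D_E_def)
  have "squarefree (d_E a4 a6 u v)"
    using fund fundamental_discriminant_4_mult_imp_squarefree[of "- d_E a4 a6 u v"]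
    by (simp add: D_E_def)
  then have "squarefree v" "coprime u v"
    by (simp_all add: squarefree_d_E_imp_squarefree squarefree_d_E_imp_coprime)
  show ?thesis
  proof (intro conjI allI impI, goal_cases)
    case 1
    show ?case by fact
  next
    case 2
    show ?case using \<open>coprime u v\<close> by (simp add: coprime_iff_gcd_eq_1)
  next
    case (3 x y)
    then obtain A B C where coprime: "coprime A C" "coprime B C" and "C > 0"
      and coords: "x = of_int A / of_int (C^2)" "y = of_int B / of_int (C^3)"
      and curve: "B^2 = A^3 + a4*A*C^4 + a6*C^6"
      by (rule rat_point_integral_coords)
    have "A*v + C^2*u > 0"
      using suit \<open>C > 0\<close> curve by (intro map_suitable_point_a_pos) simp_all
    note form = binary_form_of_point[OF \<open>squarefree v\<close> coprime(1) curve this v d]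
    show ?case
      using coprime \<open>C > 0\<close> coords form unfolding coprime_iff_gcd_eq_1
      by (intro exI[of _ A] exI[of _ B] exI[of _ C] conjI) assumption+
  qed
qed

end
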